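(* Let $\Omega^*\subset\widehat{\mathbb C}$ be a domain with $\infty\in\Omega^*$ whose complementary components are uniformly fat. Then for each $\varepsilon>0$ there are at most finitely many components $B^*$ of $\widehat{\mathbb C}\setminus\Omega^*$ with $\mathrm{diam}(B^* )>\varepsilon$. In particular, at most countably many components of $\widehat{\mathbb C}\setminus\Omega^*$ are non-degenerate.
   Context: A measurable set $B\subset\mathbb C$ is $c$-fat ($c>0$) if $\mathrm{Area}(B\cap B(z,r))\ge cr^2$ for all $z\in B$ and $0<r\le\mathrm{diam}(B)$; single points are considered $c$-fat for every $c$. A family of sets is uniformly fat if every member is $c$-fat for one common $c>0$. *)

theory Defs
  imports "HOL-Analysis.Analysis"
begin

definition c_fat :: "real \<Rightarrow> complex set \<Rightarrow> bool" where
  "c_fat c B \<longleftrightarrow> (\<exists>z. B = {z}) \<or>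
     (B \<in> sets lebesgue \<and>
      (\<forall>z\<in>B. \<forall>r. 0 < r \<and> r \<le> diameter B \<longrightarrow>
          emeasure lebesgue (B \<inter> ball z r) \<ge> ennreal (c * r\<^sup>2)))"

definition uniformly_fat :: "complex set set \<Rightarrow> bool" where
  "uniformly_fat \<F> \<longleftrightarrow> (\<exists>c>0. \<forall>B\<in>\<F>. c_fat c B)"

end

theory Submission
  imports Defs
begin

text \<open>Near any of its points, a c-fat component of diameter greater than \<open>\<epsilon>\<close> occupies area at
  least \<open>c \<epsilon>\<^sup>2\<close> within distance \<open>\<epsilon>\<close>. These pieces of distinct components are disjoint and lie in
  a fixed bounded disc, so there can be only finitely many such components. A non-degenerate
  component has positive diameter, so it exceeds \<open>1/n\<close> for some \<open>n\<close>, and the non-degenerate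
  components form a countable union of finite sets.\<close>

lemma finite_disjoint_family_emeasure_ge:
  fixes F :: "'i \<Rightarrow> 'a set" and \<delta> :: real
  assumes disj: "disjoint_family_on F I"
    and sets: "\<And>i. i \<in> I \<Longrightarrow> F i \<in> sets M"
    and sub: "\<And>i. i \<in> I \<Longrightarrow> F i \<subseteq> K"
    and K: "K \<in> sets M" "emeasure M K \<noteq> \<infinity>"
    and \<delta>: "\<delta> > 0"
    and ge: "\<And>i. i \<in> I \<Longrightarrow> ennreal \<delta> \<le> emeasure M (F i)"
  shows "finite I"
proof -
  have card_le: "real (card G) * \<delta> \<le> measure M K" if G: "G \<subseteq> I" "finite G" for G
  proof -
    have "ennreal (real (card G) * \<delta>) = (\<Sum>i\<in>G. ennreal \<delta>)"
      using \<delta> by (simp add: ennreal_mult ennreal_of_nat_eq_real_of_nat)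
    also have "\<dots> \<le> (\<Sum>i\<in>G. emeasure M (F i))"
      using G ge by (intro sum_mono) blast
    also have "\<dots> = emeasure M (\<Union>i\<in>G. F i)"
      using G sets by (intro sum_emeasure disjoint_family_on_mono[OF G(1) disj]) auto
    also have "\<dots> \<le> emeasure M K"
      using G sub K(1) by (intro emeasure_mono) auto
    also have "\<dots> = ennreal (measure M K)"
      using K by (simp add: emeasure_eq_ennreal_measure)
    finally show ?thesis
      by simp
  qed
  have "card G \<le> nat \<lceil>measure M K / \<delta>\<rceil>" if "G \<subseteq> I" "finite G" for G
  proof -
    have "real (card G) \<le> measure M K / \<delta>"
      using card_le[OF that] \<delta> by (simp add: field_simps)
    then show ?thesis by linarith
  qed
  then show ?thesis
    using finite_if_finite_subsets_card_bdd by blast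
qed

lemma c_fat_emeasure_ball_ge:
  assumes "c_fat c B" "0 < r" "r \<le> diameter B" "z \<in> B"
  shows "B \<in> sets lebesgue" and "ennreal (c * r\<^sup>2) \<le> emeasure lebesgue (B \<inter> ball z r)"
proof -
  have "\<nexists>w. B = {w}"
    using assms(2,3) by auto
  then have "B \<in> sets lebesgue"
    and fat: "\<forall>z\<in>B. \<forall>r. 0 < r \<and> r \<le> diameter B \<longrightarrow>
          emeasure lebesgue (B \<inter> ball z r) \<ge> ennreal (c * r\<^sup>2)"
    using assms(1) unfolding c_fat_def by blast+
  then show "B \<in> sets lebesgue" and "ennreal (c * r\<^sup>2) \<le> emeasure lebesgue (B \<inter> ball z r)"
    using assms(2-4) by blast+
qed

lemma finite_c_fat_diameter_gt:
  fixes \<B> :: "complex set set"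
  assumes disj: "pairwise disjnt \<B>" and bdd: "bounded (\<Union>\<B>)"
    and fat: "\<And>B. B \<in> \<B> \<Longrightarrow> c_fat c B" and "c > 0" "\<epsilon> > 0"
  shows "finite {B \<in> \<B>. \<epsilon> < diameter B}"
proof -
  let ?I = "{B \<in> \<B>. \<epsilon> < diameter B}"
  obtain R where R: "\<And>x. x \<in> \<Union>\<B> \<Longrightarrow> norm x \<le> R"
    using bdd unfolding bounded_iff by blast
  define z where "z B = (SOME x. x \<in> B)" for B :: "complex set"
  have z: "z B \<in> B" if "B \<in> ?I" for B
  proof -
    have "B \<noteq> {}"
      using that \<open>\<epsilon> > 0\<close> by auto
    then show ?thesis
      unfolding z_def by (simp add: some_in_eq)
  qed
  show ?thesis
  proof (rule finite_disjoint_family_emeasure_ge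
      [where M = lebesgue and K = "cball 0 (R + \<epsilon>)" and \<delta> = "c * \<epsilon>\<^sup>2"])
    have "disjoint_family_on (\<lambda>B. B) ?I"
      using disj by (auto simp: disjoint_family_on_def pairwise_def disjnt_def)
    then show "disjoint_family_on (\<lambda>B. B \<inter> ball (z B) \<epsilon>) ?I"
      by (rule disjoint_family_on_bisimulation) blast
    show "B \<inter> ball (z B) \<epsilon> \<in> sets lebesgue"
      and "ennreal (c * \<epsilon>\<^sup>2) \<le> emeasure lebesgue (B \<inter> ball (z B) \<epsilon>)" if "B \<in> ?I" for B
      using c_fat_emeasure_ball_ge[OF fat _ _ z] that \<open>\<epsilon> > 0\<close> by auto
    show "B \<inter> ball (z B) \<epsilon> \<subseteq> cball 0 (R + \<epsilon>)" if "B \<in> ?I" for B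
    proof
      fix x assume x: "x \<in> B \<inter> ball (z B) \<epsilon>"
      have "norm (z B) \<le> R"
        using R z[OF that] that by blast
      moreover have "norm x \<le> norm (z B) + dist (z B) x"
        by (metis dist_0_norm dist_triangle)
      ultimately show "x \<in> cball 0 (R + \<epsilon>)"
        using x by simp
    qed
  qed (use \<open>c > 0\<close> \<open>\<epsilon> > 0\<close> emeasure_lborel_cball_finite[of "0::complex" "R + \<epsilon>"] in auto)
qed

lemma diameter_pos_if_not_singleton:
  fixes S :: "'a::metric_space set"
  assumes "bounded S" "S \<noteq> {}" "\<nexists>z. S = {z}"
  shows "0 < diameter S"
proof -
  obtain x y where "x \<in> S" "y \<in> S" "x \<noteq> y"
    using assms(2,3) by blast
  then show ?thesis
    using diameter_bounded_bound[OF assms(1)] by (meson dist_pos_lt order_less_le_trans)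
qed

lemma countable_if_finite_superlevel_sets:
  fixes f :: "'a \<Rightarrow> real"
  assumes "\<And>\<epsilon>. \<epsilon> > 0 \<Longrightarrow> finite {x \<in> A. \<epsilon> < f x}"
  shows "countable {x \<in> A. 0 < f x}"
proof -
  have "{x \<in> A. 0 < f x} = (\<Union>n. {x \<in> A. 1 / real (Suc n) < f x})"
  proof (intro equalityI subsetI)
    fix x assume "x \<in> {x \<in> A. 0 < f x}"
    then obtain n where "inverse (real (Suc n)) < f x" "x \<in> A"
      using reals_Archimedean by blast
    then show "x \<in> (\<Union>n. {x \<in> A. 1 / real (Suc n) < f x})"
      by (auto simp: inverse_eq_divide)
  next
    fix x assume "x \<in> (\<Union>n. {x \<in> A. 1 / real (Suc n) < f x})"
    then obtain n where "1 / real (Suc n) < f x" "x \<in> A"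
      by blast
    moreover have "0 < 1 / real (Suc n)"
      by simp
    ultimately have "0 < f x"
      by linarith
    with \<open>x \<in> A\<close> show "x \<in> {x \<in> A. 0 < f x}"
      by simp
  qed
  also have "countable \<dots>"
    using assms by (intro countable_UN) (auto intro: countable_finite)
  finally show ?thesis .
qed

theorem lemma4p1:
  fixes \<Omega> :: "complex set"
  assumes "open \<Omega>" and "connected \<Omega>" and "\<Omega> \<noteq> {}"
    and "bounded (- \<Omega>)"
    and "uniformly_fat (components (- \<Omega>))"
  shows "(\<forall>\<epsilon>>0. finite {B \<in> components (- \<Omega>). diameter B > \<epsilon>})
       \<and> countable {B \<in> components (- \<Omega>). \<not> (\<exists>z. B = {z})}"
proof -
  obtain c where "c > 0" and fat: "\<And>B. B \<in> components (- \<Omega>) \<Longrightarrow> c_fat c B"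
    using assms(5) unfolding uniformly_fat_def by blast
  have disj: "pairwise disjnt (components (- \<Omega>))"
    using pairwise_disjoint_components unfolding pairwise_def disjnt_def by blast
  have fin: "\<forall>\<epsilon>>0. finite {B \<in> components (- \<Omega>). diameter B > \<epsilon>}"
    using finite_c_fat_diameter_gt[OF disj _ fat \<open>c > 0\<close>] assms(4)
    by simp
  have "{B \<in> components (- \<Omega>). \<nexists>z. B = {z}} \<subseteq> {B \<in> components (- \<Omega>). 0 < diameter B}"
    using assms(4) in_components_nonempty in_components_subset
    by (blast intro: diameter_pos_if_not_singleton bounded_subset)
  moreover have "countable {B \<in> components (- \<Omega>). 0 < diameter B}"
    using fin by (intro countable_if_finite_superlevel_sets) auto
  ultimately show ?thesis
    using fin countable_subset by blast
qed

end
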